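(* For every $r\in\mathbb{N}$, $0\le l\le r-1$ and $z\in\mathbb{C}$, $\lim_{q\uparrow1}P^l_{q,r}(z)=P^l_r(z)$.
   Context: $0<q<1$, $[w]_q:=(1-q^w)/(1-q)$, $[n]_q!:=[n]_q\cdots[1]_q$. For $0\le l\le r-2$, $P^l_{q,r}(z):=\frac{(-1)^{r-1-l}}{[r-1]_q!}\sum_{1\le m_1<\cdots<m_{r-1-l}\le r-1}q^{m_1+\cdots+m_{r-1-l}}[z-m_1]_q\cdots[z-m_{r-1-l}]_q$, and $P^{r-1}_{q,r}(z):=1/[r-1]_q!$. The Stirling numbers of the first kind $s(l,j)$ are defined by $x(x+1)\cdots(x+l-1)=\sum_{j=0}^l s(l,j)x^j$, and $P^l_r(z):=\frac{1}{(r-1)!}\sum_{j=l}^{r-1}\binom{j}{l}s(r,j+1)(-z)^{j-l}$. *)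

theory Defs
  imports "HOL-Analysis.Analysis" "HOL-Combinatorics.Stirling"
begin

definition qnum :: "real \<Rightarrow> complex \<Rightarrow> complex" where
  "qnum q w = (1 - (complex_of_real q) powr w) / (1 - complex_of_real q)"

definition qfact :: "real \<Rightarrow> nat \<Rightarrow> complex" where
  "qfact q n = (\<Prod>k=1..n. qnum q (of_nat k))"

text \<open>P^l_{q,r}(z): the sum over 1 <= m_1 < ... < m_{r-1-l} <= r-1 is a sum over
  subsets S of {1..r-1} of cardinality r-1-l.\<close>
definition Pq :: "real \<Rightarrow> nat \<Rightarrow> nat \<Rightarrow> complex \<Rightarrow> complex" where
  "Pq q r l z =
     (if l = r - 1 then 1 / qfact q (r - 1)
      else (-1) ^ (r - 1 - l) / qfact q (r - 1) *
        (\<Sum>S\<in>{S. S \<subseteq> {1..r-1} \<and> card S = r - 1 - l}.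
            complex_of_real (q ^ (\<Sum>S)) * (\<Prod>m\<in>S. qnum q (z - of_nat m))))"

text \<open>P^l_r(z), with s(r,j+1) the (unsigned) Stirling numbers of the first kind.\<close>
definition Pclass :: "nat \<Rightarrow> nat \<Rightarrow> complex \<Rightarrow> complex" where
  "Pclass r l z = 1 / of_nat (fact (r - 1)) *
     (\<Sum>j=l..r-1. of_nat (j choose l) * of_nat (stirling r (j + 1)) * (- z) ^ (j - l))"

end

theory Submission
  imports Defs
begin

text \<open>Each q-number [w]_q is the difference quotient of q \<mapsto> q^w at 1, so it tends to w as
  q \<up> 1, and P^l_{q,r}(z) tends to (-1)^{r-1-l}/(r-1)! times the elementary symmetric
  function e_{r-1-l} of z-1, ..., z-(r-1). That function is a coefficient of
  \<Prod>_{m=1}^{r-1} (x + m - z), the rising factorial of x - z + 1; expanding the rising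
  factorial in Stirling numbers and re-expanding the powers of x - z by the binomial theorem
  identifies it with the Stirling sum defining P^l_r(z).\<close>

definition elem_sym :: "('b \<Rightarrow> 'a::comm_semiring_1) \<Rightarrow> 'b set \<Rightarrow> nat \<Rightarrow> 'a" where
  "elem_sym a A k = (\<Sum>S | S \<subseteq> A \<and> card S = k. \<Prod>m\<in>S. a m)"

lemma elem_sym_0:
  assumes "finite A"
  shows "elem_sym a A 0 = 1"
proof -
  have "{S. S \<subseteq> A \<and> card S = 0} = {{}}"
    using assms by (auto dest: finite_subset)
  then show ?thesis
    by (simp add: elem_sym_def)
qed

lemma elem_sym_uminus:
  "elem_sym (\<lambda>m. - a m) A k = (-1) ^ k * elem_sym a A k"
  for a :: "'b \<Rightarrow> 'a::comm_ring_1"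
  unfolding elem_sym_def sum_distrib_left by (intro sum.cong) (auto simp: prod_uminus)

lemma prod_add_elem_sym:
  fixes a :: "'b \<Rightarrow> 'a::comm_semiring_1"
  assumes "finite A"
  shows "(\<Prod>m\<in>A. x + a m) = (\<Sum>k\<le>card A. elem_sym a A (card A - k) * x ^ k)"
proof -
  have "(\<Prod>m\<in>A. x + a m) = (\<Sum>S\<in>Pow A. (\<Prod>m\<in>S. a m) * x ^ (card A - card S))"
    using prod_add[OF assms, of a "\<lambda>_. x"] assms
    by (simp add: add.commute card_Diff_subset finite_subset)
  also have "\<dots> = (\<Sum>k\<le>card A. \<Sum>S | S \<in> Pow A \<and> card A - card S = k.
                    (\<Prod>m\<in>S. a m) * x ^ (card A - card S))"
    using assms by (intro sum.group[symmetric]) auto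
  also have "\<dots> = (\<Sum>k\<le>card A. elem_sym a A (card A - k) * x ^ k)"
  proof (intro sum.cong refl)
    fix k assume k: "k \<in> {..card A}"
    have "{S. S \<in> Pow A \<and> card A - card S = k} = {S. S \<subseteq> A \<and> card S = card A - k}"
      using k card_mono[OF assms] by auto
    then have "(\<Sum>S | S \<in> Pow A \<and> card A - card S = k. (\<Prod>m\<in>S. a m) * x ^ (card A - card S))
               = (\<Sum>S | S \<subseteq> A \<and> card S = card A - k. (\<Prod>m\<in>S. a m) * x ^ k)"
      using k by (intro sum.cong) auto
    then show "(\<Sum>S | S \<in> Pow A \<and> card A - card S = k. (\<Prod>m\<in>S. a m) * x ^ (card A - card S))
               = elem_sym a A (card A - k) * x ^ k"
      by (simp add: elem_sym_def sum_distrib_right)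
  qed
  finally show ?thesis .
qed

lemma stirling_Suc_pochhammer:
  "pochhammer (y + 1) n = (\<Sum>j\<le>n. of_nat (stirling (Suc n) (Suc j)) * y ^ j)"
  for y :: "'a::idom"
proof (cases "y = 0")
  case True
  have "pochhammer 1 n = (of_nat (fact n) :: 'a)"
    using pochhammer_of_nat[of 1 n] by (simp add: pochhammer_fact)
  with True show ?thesis
    by (simp add: sum.atMost_shift stirling_Suc_n_1 del: stirling.simps)
next
  case False
  have "y * pochhammer (y + 1) n = pochhammer y (Suc n)"
    by (simp add: pochhammer_rec)
  also have "\<dots> = (\<Sum>k\<le>Suc n. of_nat (stirling (Suc n) k) * y ^ k)"
    by (rule stirling_pochhammer[symmetric])
  also have "\<dots> = (\<Sum>j\<le>n. of_nat (stirling (Suc n) (Suc j)) * y ^ Suc j)"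
    by (subst sum.atMost_shift) (simp add: lessThan_Suc_atMost del: stirling.simps)
  also have "\<dots> = y * (\<Sum>j\<le>n. of_nat (stirling (Suc n) (Suc j)) * y ^ j)"
    by (simp add: sum_distrib_left mult_ac del: stirling.simps)
  finally show ?thesis
    using False by simp
qed

lemma sum_power_shift:
  fixes c :: "nat \<Rightarrow> 'a::comm_semiring_1"
  shows "(\<Sum>j\<le>n. c j * (x + w) ^ j) =
         (\<Sum>k\<le>n. (\<Sum>j=k..n. of_nat (j choose k) * c j * w ^ (j - k)) * x ^ k)"
proof -
  have "(\<Sum>j\<le>n. c j * (x + w) ^ j) =
        (\<Sum>j\<le>n. \<Sum>k\<le>n. if k \<le> j then c j * (of_nat (j choose k) * x ^ k * w ^ (j - k)) else 0)"
  proof (intro sum.cong refl)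
    fix j assume "j \<in> {..n}"
    then have "{..n} \<inter> {k. k \<le> j} = {..j}" by auto
    then show "c j * (x + w) ^ j =
      (\<Sum>k\<le>n. if k \<le> j then c j * (of_nat (j choose k) * x ^ k * w ^ (j - k)) else 0)"
      by (simp add: binomial_ring sum_distrib_left sum.If_cases)
  qed
  also have "\<dots> = (\<Sum>k\<le>n. \<Sum>j\<le>n. if k \<le> j then c j * (of_nat (j choose k) * x ^ k * w ^ (j - k)) else 0)"
    by (rule sum.swap)
  also have "\<dots> = (\<Sum>k\<le>n. (\<Sum>j=k..n. of_nat (j choose k) * c j * w ^ (j - k)) * x ^ k)"
  proof (intro sum.cong refl)
    fix k assume "k \<in> {..n}"
    have "{..n} \<inter> {j. k \<le> j} = {k..n}" by auto
    then show "(\<Sum>j\<le>n. if k \<le> j then c j * (of_nat (j choose k) * x ^ k * w ^ (j - k)) else 0) =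
      (\<Sum>j=k..n. of_nat (j choose k) * c j * w ^ (j - k)) * x ^ k"
      by (simp add: sum.If_cases sum_distrib_left sum_distrib_right mult_ac)
  qed
  finally show ?thesis .
qed

lemma elem_sym_of_nat_minus_stirling:
  fixes z :: "'a::{idom, real_normed_div_algebra}"
  assumes "l \<le> n"
  shows "elem_sym (\<lambda>m. of_nat m - z) {1..n} (n - l) =
         (\<Sum>j=l..n. of_nat (j choose l) * of_nat (stirling (Suc n) (Suc j)) * (- z) ^ (j - l))"
proof -
  define c where
    "c k = (\<Sum>j=k..n. of_nat (j choose k) * of_nat (stirling (Suc n) (Suc j)) * (- z) ^ (j - k))"
    for k
  have "(\<Sum>k\<le>n. elem_sym (\<lambda>m. of_nat m - z) {1..n} (n - k) * x ^ k) = (\<Sum>k\<le>n. c k * x ^ k)"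
    for x :: 'a
  proof -
    have "(\<Sum>k\<le>n. elem_sym (\<lambda>m. of_nat m - z) {1..n} (n - k) * x ^ k) =
          (\<Prod>m\<in>{1..n}. x + (of_nat m - z))"
      using prod_add_elem_sym[of "{1..n}" x "\<lambda>m. of_nat m - z"] by simp
    also have "\<dots> = pochhammer ((x + - z) + 1) n"
      unfolding pochhammer_prod atLeast0LessThan One_nat_def prod.atLeast1_atMost_eq
      by (intro prod.cong) (simp_all add: algebra_simps)
    also have "\<dots> = (\<Sum>j\<le>n. of_nat (stirling (Suc n) (Suc j)) * (x + - z) ^ j)"
      by (rule stirling_Suc_pochhammer)
    also have "\<dots> = (\<Sum>k\<le>n. c k * x ^ k)"
      unfolding c_def by (rule sum_power_shift)
    finally show ?thesis .
  qed
  then have "\<forall>k\<le>n. elem_sym (\<lambda>m. of_nat m - z) {1..n} (n - k) = c k"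
    using polyfun_eq_coeffs[of "\<lambda>k. elem_sym (\<lambda>m. of_nat m - z) {1..n} (n - k)" n c] by simp
  with assms show ?thesis
    unfolding c_def by blast
qed

lemma Pclass_eq_elem_sym:
  assumes "l \<le> n"
  shows "Pclass (Suc n) l z = (-1) ^ (n - l) / fact n * elem_sym (\<lambda>m. z - of_nat m) {1..n} (n - l)"
proof -
  have "elem_sym (\<lambda>m. of_nat m - z) {1..n} (n - l) =
        (-1) ^ (n - l) * elem_sym (\<lambda>m. z - of_nat m) {1..n} (n - l)"
    using elem_sym_uminus[of "\<lambda>m. z - of_nat m"] by simp
  then show ?thesis
    using elem_sym_of_nat_minus_stirling[OF assms, of z] by (simp add: Pclass_def del: stirling.simps)
qed

lemma qnum_tendsto: "((\<lambda>q. qnum q w) \<longlongrightarrow> w) (at_left (1::real))"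
proof -
  have "((\<lambda>y. (y powr w - 1 powr w) / (y - 1)) \<longlongrightarrow> w * 1 powr (w - 1)) (at (1::complex))"
    using has_field_derivative_powr[of 1 w] by (simp add: has_field_derivative_iff nonpos_Reals_def)
  moreover have "filterlim complex_of_real (at 1) (at_left (1::real))"
  proof (rule filterlim_atI)
    show "(complex_of_real \<longlongrightarrow> 1) (at_left 1)"
      using tendsto_of_real[OF tendsto_ident_at, of 1 "{..<1}"] by simp
    show "\<forall>\<^sub>F q in at_left 1. complex_of_real q \<noteq> 1"
      by (auto simp: eventually_at_filter)
  qed
  ultimately have "((\<lambda>q. (of_real q powr w - 1) / (of_real q - 1)) \<longlongrightarrow> w) (at_left (1::real))"
    using filterlim_compose by fastforce
  moreover have "(of_real q powr w - 1) / (of_real q - 1) = qnum q w" for q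
    unfolding qnum_def by (metis minus_diff_eq minus_divide_divide)
  ultimately show ?thesis by simp
qed

lemma qfact_tendsto: "((\<lambda>q. qfact q n) \<longlongrightarrow> fact n) (at_left (1::real))"
proof -
  have "((\<lambda>q. qfact q n) \<longlongrightarrow> (\<Prod>k=1..n. of_nat k)) (at_left (1::real))"
    unfolding qfact_def by (intro tendsto_prod qnum_tendsto)
  then show ?thesis by (simp add: fact_prod)
qed

lemma Pq_tendsto_elem_sym:
  assumes "l \<le> n"
  shows "((\<lambda>q. Pq q (Suc n) l z) \<longlongrightarrow>
           (-1) ^ (n - l) / fact n * elem_sym (\<lambda>m. z - of_nat m) {1..n} (n - l)) (at_left 1)"
proof (cases "l = n")
  case True
  have "((\<lambda>q. 1 / qfact q n) \<longlongrightarrow> 1 / fact n) (at_left 1)"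
    by (intro tendsto_intros qfact_tendsto) simp
  with True show ?thesis
    by (simp add: Pq_def elem_sym_0)
next
  case False
  have "((\<lambda>q. (-1) ^ (n - l) / qfact q n *
            (\<Sum>S | S \<subseteq> {1..n} \<and> card S = n - l.
               of_real (q ^ \<Sum>S) * (\<Prod>m\<in>S. qnum q (z - of_nat m))))
        \<longlongrightarrow> (-1) ^ (n - l) / fact n *
            (\<Sum>S | S \<subseteq> {1..n} \<and> card S = n - l.
               of_real (1 ^ \<Sum>S) * (\<Prod>m\<in>S. z - of_nat m))) (at_left 1)"
    by (intro tendsto_intros qfact_tendsto qnum_tendsto) simp
  with False show ?thesis
    by (simp add: Pq_def elem_sym_def)
qed

theorem lemma3p3:
  fixes r l :: nat and z :: complex
  assumes "r \<ge> 1" and "l \<le> r - 1"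
  shows "((\<lambda>q. Pq q r l z) \<longlongrightarrow> Pclass r l z) (at_left 1)"
proof -
  obtain n where r: "r = Suc n" and l: "l \<le> n"
    using assms by (cases r) auto
  show ?thesis
    using Pq_tendsto_elem_sym[OF l] Pclass_eq_elem_sym[OF l] by (simp add: r)
qed

end
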